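(* Let $\ell$ be a prime, $V$ a finite-dimensional $\mathbf{Q}_\ell$-vector space, $k$ an integer with $0<k<\dim(V)$, and $g \in \mathrm{GL}(V)$. Then $\wedge^k(g)$ is unipotent if and only if there exists a $k$-th root of unity $\gamma \in \mathbf{Z}_\ell$ such that $\gamma g$ is unipotent.
   Context: $\wedge^k(g)$ denotes the induced automorphism of the $k$-th exterior power $\wedge^k(V)$. *)

theory Defs
  imports "Jordan_Normal_Form.Determinant" "Jordan_Normal_Form.DL_Submatrix"
          "HOL-Computational_Algebra.Primes"
begin

definition padic_abs_int :: "nat \<Rightarrow> int \<Rightarrow> real" where
  "padic_abs_int l m = (if m = 0 then 0 else inverse (real l ^ multiplicity (int l) m))"

text \<open>nv is an absolute value making the field 'a (of characteristic 0) a copy of Q_l: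
  it is non-archimedean, restricts to the l-adic absolute value on the integers (hence on Q),
  the field is complete for it, and Q is dense.  This characterises Q_l up to a unique
  isometric isomorphism.\<close>
definition is_Ql_absval :: "nat \<Rightarrow> ('a::field_char_0 \<Rightarrow> real) \<Rightarrow> bool" where
  "is_Ql_absval l nv \<longleftrightarrow>
     (\<forall>x. nv x \<ge> 0) \<and> (\<forall>x. nv x = 0 \<longleftrightarrow> x = 0) \<and>
     (\<forall>x y. nv (x * y) = nv x * nv y) \<and>
     (\<forall>x y. nv (x + y) \<le> max (nv x) (nv y)) \<and>
     (\<forall>m::int. nv (of_int m) = padic_abs_int l m) \<and>
     (\<forall>X::nat \<Rightarrow> 'a. (\<forall>e>0. \<exists>N. \<forall>m\<ge>N. \<forall>n\<ge>N. nv (X m - X n) < e) \<longrightarrow>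
          (\<exists>L. \<forall>e>0. \<exists>N. \<forall>n\<ge>N. nv (X n - L) < e)) \<and>
     (\<forall>x. \<forall>e>0. \<exists>q::rat. nv (x - of_rat q) < e)"

definition unipotent_mat :: "'a::comm_ring_1 mat \<Rightarrow> bool" where
  "unipotent_mat A \<longleftrightarrow> (\<exists>N. (A - 1\<^sub>m (dim_row A)) ^\<^sub>m N = 0\<^sub>m (dim_row A) (dim_row A))"

definition ksubsets :: "nat \<Rightarrow> nat \<Rightarrow> nat set set" where
  "ksubsets n k = {I. I \<subseteq> {0..<n} \<and> card I = k}"

text \<open>The k-th exterior power of (the map given by) the n x n matrix A, acting on coordinate
  vectors w.r.t. the basis e_J (J a k-subset of {0..<n}) of the k-th exterior power:
  e_J is sent to the sum over I of minor(I,J) e_I (the k-th compound matrix).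
  Coordinate vectors are functions nat set => 'a vanishing outside the k-subsets.\<close>
definition ext_pow :: "nat \<Rightarrow> 'a::comm_ring_1 mat \<Rightarrow> (nat set \<Rightarrow> 'a) \<Rightarrow> (nat set \<Rightarrow> 'a)" where
  "ext_pow k A c = (\<lambda>I. if I \<in> ksubsets (dim_row A) k
      then (\<Sum>J\<in>ksubsets (dim_row A) k. det (submatrix A I J) * c J) else 0)"

definition ext_space :: "nat \<Rightarrow> nat \<Rightarrow> (nat set \<Rightarrow> 'a::zero) set" where
  "ext_space n k = {c. \<forall>I. I \<notin> ksubsets n k \<longrightarrow> c I = 0}"

definition ext_pow_unipotent :: "nat \<Rightarrow> 'a::comm_ring_1 mat \<Rightarrow> bool" where
  "ext_pow_unipotent k A \<longleftrightarrow>
     (\<exists>N. \<forall>c\<in>ext_space (dim_row A) k. ((\<lambda>d I. ext_pow k A d I - d I) ^^ N) c = (\<lambda>I. 0))"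

end

theory Submission
  imports Defs "Jordan_Normal_Form.Schur_Decomposition" "Jordan_Normal_Form.DL_Rank"
    "HOL-Algebra.Algebraic_Closure_Type"
begin

text \<open>
  Over an algebraic closure, g is similar to an upper triangular matrix T. By Cauchy-Binet the
  k-th compound matrix is multiplicative, so \<open>\<wedge>\<^sup>k(g)\<close> is similar to \<open>\<wedge>\<^sup>k(T)\<close>, which is triangular
  with respect to the weight \<open>\<Sum>I\<close> of the k-subsets I and has the diagonal entries
  \<open>\<Prod>i\<in>I. T\<^sub>i\<^sub>i\<close>. Hence \<open>\<wedge>\<^sup>k(g)\<close> is unipotent iff all these products are 1. Since 0 < k < n,
  any two indices can be exchanged inside some k-subset, so this forces all \<open>T\<^sub>i\<^sub>i\<close> to be a
  single \<open>\<lambda>\<close> with \<open>\<lambda>\<^sup>k = 1\<close>. Then \<open>\<lambda> = tr(g)/n\<close> lies in the base field, and \<open>\<gamma> = 1/\<lambda>\<close> makes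
  \<open>\<gamma> g\<close> unipotent; as a root of unity, \<open>\<gamma>\<close> has absolute value 1. The converse runs the same
  equivalences backwards.
\<close>

section \<open>k-subsets and minors\<close>

lemma finite_ksubsets: "finite (ksubsets n k)"
  unfolding ksubsets_def by (rule finite_subset[of _ "Pow {0..<n}"]) auto

lemma ksubsetsD:
  assumes "I \<in> ksubsets n k"
  shows "I \<subseteq> {0..<n}" "card I = k" "finite I"
  using assms unfolding ksubsets_def by (auto intro: finite_subset)

lemma card_ksubset_bounded:
  assumes "I \<in> ksubsets n k"
  shows "card {i. i < n \<and> i \<in> I} = k"
proof -
  have "{i. i < n \<and> i \<in> I} = I" using ksubsetsD(1)[OF assms] by auto
  then show ?thesis using ksubsetsD(2)[OF assms] by simp
qed

lemma bij_betw_pick: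
  assumes "finite I"
  shows "bij_betw (pick I) {0..<card I} I"
proof -
  have "inj_on (pick I) {0..<card I}"
    by (intro inj_onI) (metis assms atLeastLessThan_iff linorder_neq_iff pick_mono less_irrefl)
  moreover have "pick I ` {0..<card I} \<subseteq> I"
    using pick_in_set by auto
  ultimately show ?thesis
    using assms by (metis bij_betw_def card_atLeastLessThan card_image card_subset_eq diff_zero)
qed

lemma submatrix_carrier_ksubsets:
  assumes "A \<in> carrier_mat n m" "I \<in> ksubsets n k" "J \<in> ksubsets m l"
  shows "submatrix A I J \<in> carrier_mat k l"
proof (rule carrier_matI)
  show "dim_row (submatrix A I J) = k" "dim_col (submatrix A I J) = l"
    using assms(1) card_ksubset_bounded[OF assms(2)] card_ksubset_bounded[OF assms(3)]
    unfolding dim_submatrix by auto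
qed

lemma submatrix_index_ksubsets:
  assumes "A \<in> carrier_mat n m" "I \<in> ksubsets n k" "J \<in> ksubsets m l" "a < k" "b < l"
  shows "submatrix A I J $$ (a, b) = A $$ (pick I a, pick J b)"
  using assms(1,4,5) card_ksubset_bounded[OF assms(2)] card_ksubset_bounded[OF assms(3)]
  by (intro submatrix_index) auto

lemma submatrix_rows_carrier:
  assumes "A \<in> carrier_mat n m" "I \<in> ksubsets n k"
  shows "submatrix A I UNIV \<in> carrier_mat k m"
proof (rule carrier_matI)
  show "dim_row (submatrix A I UNIV) = k" "dim_col (submatrix A I UNIV) = m"
    using assms(1) card_ksubset_bounded[OF assms(2)] unfolding dim_submatrix by auto
qed

lemma submatrix_cols_carrier:
  assumes "A \<in> carrier_mat n m" "J \<in> ksubsets m l"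
  shows "submatrix A UNIV J \<in> carrier_mat n l"
proof (rule carrier_matI)
  show "dim_row (submatrix A UNIV J) = n" "dim_col (submatrix A UNIV J) = l"
    using assms(1) card_ksubset_bounded[OF assms(2)] unfolding dim_submatrix by auto
qed

lemma submatrix_rows_then_cols: "submatrix (submatrix A I UNIV) UNIV J = submatrix A I J"
proof (rule eq_matI)
  fix a b
  assume "a < dim_row (submatrix A I J)" "b < dim_col (submatrix A I J)"
  then have a: "a < card {i. i < dim_row A \<and> i \<in> I}" and b: "b < card {j. j < dim_col A \<and> j \<in> J}"
    by (simp_all add: dim_submatrix)
  have a': "a < card {i. i < dim_row (submatrix A I UNIV) \<and> i \<in> UNIV}"
    and b': "b < card {j. j < dim_col (submatrix A I UNIV) \<and> j \<in> J}"
    using a b by (simp_all add: dim_submatrix)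
  have b'': "pick J b < card {j. j < dim_col A \<and> j \<in> UNIV}"
    using pick_le[OF b] by simp
  show "submatrix (submatrix A I UNIV) UNIV J $$ (a, b) = submatrix A I J $$ (a, b)"
    unfolding submatrix_index[OF a' b'] pick_UNIV submatrix_index[OF a b'']
      submatrix_index[OF a b] ..
qed (simp_all add: dim_submatrix)

lemma submatrix_mult:
  assumes "A \<in> carrier_mat m n" "B \<in> carrier_mat n p"
  shows "submatrix (A * B) I J = submatrix A I UNIV * submatrix B UNIV J"
proof (rule eq_matI)
  fix a b
  assume "a < dim_row (submatrix A I UNIV * submatrix B UNIV J)"
    "b < dim_col (submatrix A I UNIV * submatrix B UNIV J)"
  then have a: "a < card {i. i < m \<and> i \<in> I}" and b: "b < card {j. j < p \<and> j \<in> J}"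
    using assms by (simp_all add: dim_submatrix)
  have "pick I a < m" "pick J b < p"
    using pick_le[OF a] pick_le[OF b] by simp_all
  then show "submatrix (A * B) I J $$ (a, b) = (submatrix A I UNIV * submatrix B UNIV J) $$ (a, b)"
    using assms a b by (auto simp: submatrix_index dim_submatrix pick_UNIV scalar_prod_def)
qed (use assms in \<open>simp_all add: dim_submatrix\<close>)

lemma det_zero_row:
  fixes A :: "'a :: comm_ring_1 mat"
  assumes A: "A \<in> carrier_mat n n" and i: "i < n" and zero: "\<And>j. j < n \<Longrightarrow> A $$ (i, j) = 0"
  shows "det A = 0"
  unfolding det_def'[OF A]
proof (rule sum.neutral, intro ballI)
  fix p assume "p \<in> {p. p permutes {0..<n}}"
  then have "A $$ (i, p i) = 0" using zero permutes_in_image[of p "{0..<n}" i] i by simp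
  then have "(\<Prod>i = 0..<n. A $$ (i, p i)) = 0" using i by (intro prod_zero) auto
  then show "signof p * (\<Prod>i = 0..<n. A $$ (i, p i)) = 0" by simp
qed

lemma det_submatrix_one:
  assumes I: "I \<in> ksubsets n k" and J: "J \<in> ksubsets n k"
  shows "det (submatrix (1\<^sub>m n :: 'a :: comm_ring_1 mat) I J) = (if I = J then 1 else 0)"
proof -
  note ID = ksubsetsD[OF I] and JD = ksubsetsD[OF J]
  let ?M = "submatrix (1\<^sub>m n :: 'a mat) I J"
  have M: "?M \<in> carrier_mat k k"
    by (rule submatrix_carrier_ksubsets[OF one_carrier_mat I J])
  have M_index: "?M $$ (a, b) = (if pick I a = pick J b then 1 else 0)" if "a < k" "b < k" for a b
  proof -
    have "pick I a < n" "pick J b < n"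
      using pick_in_set[of a I] pick_in_set[of b J] ID JD that by auto
    then show ?thesis using submatrix_index_ksubsets[OF one_carrier_mat I J that] by simp
  qed
  show ?thesis
  proof (cases "I = J")
    case True
    have "inj_on (pick I) {0..<k}" using bij_betw_pick[OF ID(3)] ID(2) by (simp add: bij_betw_def)
    then have "?M = 1\<^sub>m k"
      using M M_index True by (intro eq_matI) (auto simp: inj_on_def)
    then show ?thesis using True by simp
  next
    case False
    have "\<not> I \<subseteq> J"
      using False card_subset_eq[OF JD(3)] ID(2) JD(2) by auto
    then obtain i where i: "i \<in> I" "i \<notin> J" by blast
    define a where "a = card {x \<in> I. x < i}"
    have "{x \<in> I. x < i} \<subset> I" using i by auto
    then have a: "a < k" unfolding a_def using psubset_card_mono[OF ID(3)] ID(2) by blast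
    have "pick I a = i" unfolding a_def by (rule pick_card_in_set[OF i(1)])
    then have "?M $$ (a, b) = 0" if "b < k" for b
      using M_index[OF a that] pick_in_set[of b J] JD that i by auto
    then show ?thesis using det_zero_row[OF M a] False by simp
  qed
qed

lemma prod_ksubsets_eq_one_iff:
  fixes t :: "nat \<Rightarrow> 'a :: field"
  assumes k: "0 < k" "k < n"
  shows "(\<forall>I\<in>ksubsets n k. (\<Prod>i\<in>I. t i) = 1) \<longleftrightarrow> (\<exists>c. c ^ k = 1 \<and> (\<forall>i<n. t i = c))"
proof
  assume prod: "\<forall>I\<in>ksubsets n k. (\<Prod>i\<in>I. t i) = 1"
  \<comment> \<open>exchange one element of a k-subset for another, possible as 0 < k < n\<close>
  have "t i = t 0" if i: "i < n" "i \<noteq> 0" for i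
  proof -
    have "k - 1 \<le> card ({0..<n} - {i, 0})" using i k by (simp add: card_Diff_subset)
    then obtain S where S: "S \<subseteq> {0..<n} - {i, 0}" "card S = k - 1" "finite S"
      by (rule obtain_subset_with_card_n)
    moreover have notin: "i \<notin> S" "0 \<notin> S" using S(1) by auto
    ultimately have "insert i S \<in> ksubsets n k" "insert 0 S \<in> ksubsets n k"
      unfolding ksubsets_def using i k by auto
    then have "(\<Prod>j\<in>insert i S. t j) = 1" "(\<Prod>j\<in>insert 0 S. t j) = 1"
      using prod by blast+
    then have "t i * (\<Prod>j\<in>S. t j) = 1" "t 0 * (\<Prod>j\<in>S. t j) = 1"
      using S(3) notin by simp_all
    then show "t i = t 0" by (metis mult_cancel_right mult_zero_left zero_neq_one)
  qed
  then have const: "\<forall>i<n. t i = t 0" by (metis bot_nat_0.not_eq_extremum)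
  have "{0..<k} \<in> ksubsets n k" unfolding ksubsets_def using k by auto
  then have "(\<Prod>i\<in>{0..<k}. t i) = 1" using prod by blast
  moreover have "(\<Prod>i\<in>{0..<k}. t i) = (\<Prod>i\<in>{0..<k}. t 0)"
    using const k by (intro prod.cong refl) (meson atLeastLessThan_iff less_trans)
  ultimately have "t 0 ^ k = 1" by simp
  with const show "\<exists>c. c ^ k = 1 \<and> (\<forall>i<n. t i = c)" by blast
next
  assume "\<exists>c. c ^ k = 1 \<and> (\<forall>i<n. t i = c)"
  then obtain c where c: "c ^ k = 1" "\<forall>i<n. t i = c" by blast
  show "\<forall>I\<in>ksubsets n k. (\<Prod>i\<in>I. t i) = 1"
  proof
    fix I assume "I \<in> ksubsets n k"
    then have "I \<subseteq> {0..<n}" "card I = k" by (simp_all add: ksubsets_def)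
    then have "(\<Prod>i\<in>I. t i) = c ^ k" using c(2) by (simp add: subset_iff)
    then show "(\<Prod>i\<in>I. t i) = 1" using c(1) by simp
  qed
qed

section \<open>The Cauchy-Binet formula\<close>

lemma det_mult_sum_injective_rows:
  fixes AA BB :: "'a :: comm_ring_1 mat"
  assumes AA: "AA \<in> carrier_mat k n" and BB: "BB \<in> carrier_mat n k"
  shows "det (AA * BB) =
    (\<Sum>f \<in> {f. (\<forall>i\<in>{0..<k}. f i \<in> {0..<n}) \<and> (\<forall>i. i \<notin> {0..<k} \<longrightarrow> f i = i) \<and> inj_on f {0..<k}}.
      (\<Prod>i\<in>{0..<k}. AA $$ (i, f i)) * det (mat\<^sub>r k k (\<lambda>i. row BB (f i))))"
    (is "_ = sum ?g ?FI")
proof -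
  let ?F = "{f. (\<forall>i\<in>{0..<k}. f i \<in> {0..<n}) \<and> (\<forall>i. i \<notin> {0..<k} \<longrightarrow> f i = i)}"
  have "det (AA * BB) = (\<Sum>f\<in>?F. det (mat\<^sub>r k k (\<lambda>i. AA $$ (i, f i) \<cdot>\<^sub>v row BB (f i))))"
    unfolding mat_mul_finsum_alt[OF AA BB] by (rule det_linear_rows_sum) (use BB in auto)
  also have "\<dots> = sum ?g ?F"
    by (intro sum.cong refl det_rows_mul) (use BB in auto)
  also have "\<dots> = sum ?g ?FI"
  proof (rule sum.mono_neutral_right)
    show "finite ?F" by (rule finite_bounded_functions) auto
    show "\<forall>f\<in>?F - ?FI. ?g f = 0"
    proof
      fix f assume "f \<in> ?F - ?FI"
      then obtain i j where "i < k" "j < k" "i \<noteq> j" "f i = f j"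
        unfolding inj_on_def by auto
      then have "det (mat\<^sub>r k k (\<lambda>i. row BB (f i))) = 0"
        by (intro det_identical_rows[of _ k i j]) auto
      then show "?g f = 0" by simp
    qed
  qed auto
  finally show ?thesis .
qed

lemma pick_permutes_injection:
  assumes L: "L \<in> ksubsets n k" and s: "s permutes {0..<k}"
  defines "f \<equiv> \<lambda>i. if i < k then pick L (s i) else i"
  shows "f ` {0..<k} = L" and "inj_on f {0..<k}"
    and "(\<lambda>i. if i < k then card {a \<in> L. a < f i} else i) = s"
proof -
  note LD = ksubsetsD[OF L]
  have pick: "bij_betw (pick L) {0..<k} L"
    using bij_betw_pick[OF LD(3)] LD(2) by simp
  have sk: "s i < k" if "i < k" for i
    using permutes_in_image[OF s] that by simp
  have "f ` {0..<k} = pick L ` s ` {0..<k}"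
    unfolding f_def by (force simp: image_iff)
  then show "f ` {0..<k} = L"
    using permutes_image[OF s] pick by (simp add: bij_betw_def)
  show "inj_on f {0..<k}"
  proof (rule inj_onI)
    fix a b assume "a \<in> {0..<k}" "b \<in> {0..<k}" "f a = f b"
    then have "s a = s b"
      using pick sk unfolding f_def bij_betw_def inj_on_def by auto
    then show "a = b" using permutes_inj[OF s] by (simp add: inj_eq)
  qed
  show "(\<lambda>i. if i < k then card {a \<in> L. a < f i} else i) = s"
    using card_pick[of "s _" L] sk LD permutes_not_in[OF s] unfolding f_def by fastforce
qed

lemma injection_pick_permutes:
  assumes f: "\<forall>i\<in>{0..<k}. f i \<in> {0..<n}" "\<forall>i. i \<notin> {0..<k} \<longrightarrow> f i = i" "inj_on f {0..<k}"
  defines "L \<equiv> f ` {0..<k}"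
  defines "s \<equiv> \<lambda>i. if i < k then card {a \<in> L. a < f i} else i"
  shows "L \<in> ksubsets n k" and "s permutes {0..<k}"
    and "(\<lambda>i. if i < k then pick L (s i) else i) = f"
proof -
  have card: "card L = k" unfolding L_def using f card_image[of f "{0..<k}"] by simp
  then show "L \<in> ksubsets n k" using f unfolding ksubsets_def L_def by auto
  have sk: "s i < k" if "i < k" for i
    using psubset_card_mono[of L "{a \<in> L. a < f i}"] card that unfolding s_def L_def by fastforce
  have pick_s: "pick L (s i) = f i" if "i < k" for i
    using pick_card_in_set[of "f i" L] that unfolding s_def L_def by simp
  show "s permutes {0..<k}"
  proof (rule inj_on_nat_permutes)
    show "inj_on s {0..<k}"
    proof (rule inj_onI)
      fix a b assume a: "a \<in> {0..<k}" and b: "b \<in> {0..<k}" and "s a = s b"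
      then have "f a = f b" using pick_s[of a] pick_s[of b] by simp
      then show "a = b" using f a b by (simp add: inj_on_def)
    qed
  qed (use sk s_def in auto)
  show "(\<lambda>i. if i < k then pick L (s i) else i) = f"
    using pick_s f by fastforce
qed

lemma bij_betw_ksubsets_permutes_injections:
  "bij_betw (\<lambda>(L, s) i. if i < k then pick L (s i) else i)
     (SIGMA L:ksubsets n k. {s. s permutes {0..<k}})
     {f. (\<forall>i\<in>{0..<k}. f i \<in> {0..<n}) \<and> (\<forall>i. i \<notin> {0..<k} \<longrightarrow> f i = i) \<and> inj_on f {0..<k}}"
    (is "bij_betw ?h ?S ?FI")
proof -
  let ?rank = "\<lambda>f. (f ` {0..<k}, \<lambda>i. if i < k then card {a \<in> f ` {0..<k}. a < f i} else i)"
  have h: "?h (L, s) \<in> ?FI \<and> ?rank (?h (L, s)) = (L, s)"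
    if "L \<in> ksubsets n k" "s permutes {0..<k}" for L s
  proof -
    note props = pick_permutes_injection[OF that]
    have h_eq: "?h (L, s) = (\<lambda>i. if i < k then pick L (s i) else i)" by simp
    have "?h (L, s) ` {0..<k} \<subseteq> {0..<n}" using props(1) ksubsetsD(1)[OF that(1)] by simp
    moreover have "?rank (?h (L, s)) = (L, s)" unfolding h_eq props(1) props(3) ..
    ultimately show ?thesis using props(2) by (simp add: image_subset_iff)
  qed
  have rank: "?rank f \<in> ?S \<and> ?h (?rank f) = f" if "f \<in> ?FI" for f
    using injection_pick_permutes[of k f n] that by simp
  show ?thesis
  proof (rule bij_betw_byWitness[where f' = ?rank])
    show "\<forall>Ls\<in>?S. ?rank (?h Ls) = Ls" "?h ` ?S \<subseteq> ?FI"
      using h by (simp_all only: image_subset_iff split_paired_Ball_Sigma mem_Collect_eq) blast+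
    show "\<forall>f\<in>?FI. ?h (?rank f) = f" "?rank ` ?FI \<subseteq> ?S"
      using rank by (simp_all only: image_subset_iff Ball_def) blast+
  qed
qed

lemma det_rows_pick_permutes:
  fixes BB :: "'a :: comm_ring_1 mat"
  assumes BB: "BB \<in> carrier_mat n k" and L: "L \<in> ksubsets n k" and s: "s permutes {0..<k}"
  shows "det (mat\<^sub>r k k (\<lambda>i. row BB (pick L (s i)))) = signof s * det (submatrix BB L UNIV)"
proof -
  have BL: "submatrix BB L UNIV \<in> carrier_mat k k"
    by (rule submatrix_rows_carrier[OF BB L])
  have "mat\<^sub>r k k (\<lambda>i. row BB (pick L (s i))) = mat k k (\<lambda>(i, j). submatrix BB L UNIV $$ (s i, j))"
  proof (rule eq_matI)
    fix i j assume "i < dim_row (mat k k (\<lambda>(i, j). submatrix BB L UNIV $$ (s i, j)))"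
      "j < dim_col (mat k k (\<lambda>(i, j). submatrix BB L UNIV $$ (s i, j)))"
    then have ij: "i < k" "j < k" by simp_all
    then have "s i < k" using permutes_in_image[OF s] by simp
    moreover have "pick L (s i) < n"
      using pick_in_set[of "s i" L] ksubsetsD[OF L] \<open>s i < k\<close> by auto
    ultimately show "mat\<^sub>r k k (\<lambda>i. row BB (pick L (s i))) $$ (i, j) =
        mat k k (\<lambda>(i, j). submatrix BB L UNIV $$ (s i, j)) $$ (i, j)"
      using BB BL ij card_ksubset_bounded[OF L] by (simp add: submatrix_index pick_UNIV)
  qed simp_all
  then show ?thesis using det_permute_rows[OF BL s] by simp
qed

lemma det_submatrix_cols_pick:
  fixes AA :: "'a :: comm_ring_1 mat"
  assumes AA: "AA \<in> carrier_mat k n" and L: "L \<in> ksubsets n k"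
  shows "det (submatrix AA UNIV L) =
    (\<Sum>s | s permutes {0..<k}. signof s * (\<Prod>i = 0..<k. AA $$ (i, pick L (s i))))"
  unfolding det_def'[OF submatrix_cols_carrier[OF AA L]]
proof (intro sum.cong refl arg_cong[where f = "\<lambda>x. _ * x"] prod.cong)
  fix s i assume "s \<in> {s. s permutes {0..<k}}" "i \<in> {0..<k}"
  then have "i < k" "s i < k" using permutes_in_image[of s "{0..<k}" i] by auto
  then show "submatrix AA UNIV L $$ (i, s i) = AA $$ (i, pick L (s i))"
    using AA card_ksubset_bounded[OF L] by (simp add: submatrix_index pick_UNIV)
qed

theorem cauchy_binet:
  fixes AA BB :: "'a :: comm_ring_1 mat"
  assumes AA: "AA \<in> carrier_mat k n" and BB: "BB \<in> carrier_mat n k"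
  shows "det (AA * BB) = (\<Sum>L\<in>ksubsets n k. det (submatrix AA UNIV L) * det (submatrix BB L UNIV))"
proof -
  let ?S = "SIGMA L:ksubsets n k. {s. s permutes {0..<k}}"
  let ?h = "\<lambda>(L, s) i. if i < k then pick L (s i) else i"
  let ?G = "\<lambda>f. (\<Prod>i\<in>{0..<k}. AA $$ (i, f i)) * det (mat\<^sub>r k k (\<lambda>i. row BB (f i)))"
  let ?F = "\<lambda>L s. (\<Prod>i = 0..<k. AA $$ (i, pick L (s i))) * (signof s * det (submatrix BB L UNIV))"
  have "det (AA * BB) = (\<Sum>Ls\<in>?S. ?G (?h Ls))"
    unfolding det_mult_sum_injective_rows[OF AA BB]
    by (rule sum.reindex_bij_betw[OF bij_betw_ksubsets_permutes_injections, symmetric])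
  also have "\<dots> = (\<Sum>(L, s)\<in>?S. ?F L s)"
  proof (rule sum.cong[OF refl])
    fix Ls assume "Ls \<in> ?S"
    then obtain L s where Ls: "Ls = (L, s)" and L: "L \<in> ksubsets n k" and s: "s permutes {0..<k}"
      by auto
    have "mat\<^sub>r k k (\<lambda>i. row BB (?h Ls i)) = mat\<^sub>r k k (\<lambda>i. row BB (pick L (s i)))"
      unfolding Ls by (rule eq_matI) auto
    then show "?G (?h Ls) = (case Ls of (L, s) \<Rightarrow> ?F L s)"
      using det_rows_pick_permutes[OF BB L s] unfolding Ls by simp
  qed
  also have "\<dots> = (\<Sum>L\<in>ksubsets n k. \<Sum>s | s permutes {0..<k}. ?F L s)"
    by (rule sum.Sigma[symmetric]) (auto simp: finite_ksubsets finite_permutations)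
  also have "\<dots> = (\<Sum>L\<in>ksubsets n k. det (submatrix AA UNIV L) * det (submatrix BB L UNIV))"
    by (intro sum.cong refl)
      (simp add: det_submatrix_cols_pick[OF AA] sum_distrib_right mult.assoc mult.left_commute)
  finally show ?thesis .
qed

lemma det_submatrix_mult:
  fixes A B :: "'a :: comm_ring_1 mat"
  assumes A: "A \<in> carrier_mat m n" and B: "B \<in> carrier_mat n p"
    and I: "I \<in> ksubsets m k" and J: "J \<in> ksubsets p k"
  shows "det (submatrix (A * B) I J) = (\<Sum>L\<in>ksubsets n k. det (submatrix A I L) * det (submatrix B L J))"
  unfolding submatrix_mult[OF A B]
    cauchy_binet[OF submatrix_rows_carrier[OF A I] submatrix_cols_carrier[OF B J]]
    submatrix_rows_then_cols submatrix_split[symmetric] ..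

section \<open>The action on the exterior power\<close>

lemma ext_pow_in_ext_space: "ext_pow k A c \<in> ext_space (dim_row A) k"
  unfolding ext_pow_def ext_space_def by auto

lemma ext_pow_mult:
  fixes A B :: "'a :: comm_ring_1 mat"
  assumes A: "A \<in> carrier_mat n n" and B: "B \<in> carrier_mat n n"
  shows "ext_pow k (A * B) c = ext_pow k A (ext_pow k B c)"
proof
  fix I
  let ?KS = "ksubsets n k"
  let ?d = "\<lambda>M I J. det (submatrix M I J)"
  have dims: "dim_row (A * B) = n" "dim_row A = n" "dim_row B = n" using A B by auto
  show "ext_pow k (A * B) c I = ext_pow k A (ext_pow k B c) I"
  proof (cases "I \<in> ?KS")
    case True
    have "ext_pow k (A * B) c I = (\<Sum>J\<in>?KS. (\<Sum>L\<in>?KS. ?d A I L * ?d B L J) * c J)"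
      unfolding ext_pow_def dims using True det_submatrix_mult[OF A B True] by simp
    also have "\<dots> = (\<Sum>J\<in>?KS. \<Sum>L\<in>?KS. ?d A I L * (?d B L J * c J))"
      by (simp add: sum_distrib_right mult.assoc)
    also have "\<dots> = (\<Sum>L\<in>?KS. ?d A I L * (\<Sum>J\<in>?KS. ?d B L J * c J))"
      by (subst sum.swap) (simp add: sum_distrib_left)
    also have "\<dots> = ext_pow k A (ext_pow k B c) I"
      unfolding ext_pow_def dims using True by (auto intro!: sum.cong)
    finally show ?thesis .
  qed (simp add: ext_pow_def dims)
qed

lemma ext_pow_one:
  assumes c: "c \<in> ext_space n k"
  shows "ext_pow k (1\<^sub>m n :: 'a :: comm_ring_1 mat) c = c"
proof
  fix I
  show "ext_pow k (1\<^sub>m n) c I = c I"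
  proof (cases "I \<in> ksubsets n k")
    case True
    then have "ext_pow k (1\<^sub>m n :: 'a mat) c I = (\<Sum>J\<in>ksubsets n k. if I = J then c J else 0)"
      unfolding ext_pow_def by (auto simp: det_submatrix_one intro!: sum.cong)
    then show ?thesis using True finite_ksubsets by simp
  qed (use c in \<open>simp add: ext_pow_def ext_space_def\<close>)
qed

lemma ext_pow_linear:
  "ext_pow k A (\<lambda>I. \<Sum>J\<in>S. a J * v J I) = (\<lambda>I. \<Sum>J\<in>S. a J * ext_pow k A (v J) I)"
proof
  fix I
  have "(\<Sum>L\<in>ksubsets (dim_row A) k. det (submatrix A I L) * (\<Sum>J\<in>S. a J * v J L)) =
      (\<Sum>J\<in>S. a J * (\<Sum>L\<in>ksubsets (dim_row A) k. det (submatrix A I L) * v J L))"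
    by (simp add: sum_distrib_left mult.left_commute sum.swap[of _ S])
  then show "ext_pow k A (\<lambda>I. \<Sum>J\<in>S. a J * v J I) I = (\<Sum>J\<in>S. a J * ext_pow k A (v J) I)"
    unfolding ext_pow_def by simp
qed

lemma ext_pow_zero [simp]: "ext_pow k A (\<lambda>I. 0) = (\<lambda>I. 0)"
  unfolding ext_pow_def by auto

lemma ext_pow_diff: "ext_pow k A (\<lambda>I. x I - y I) = (\<lambda>I. ext_pow k A x I - ext_pow k A y I)"
  unfolding ext_pow_def by (auto simp: algebra_simps sum_subtractf)

definition ext_pow_minus_id :: "nat \<Rightarrow> 'a :: comm_ring_1 mat \<Rightarrow> (nat set \<Rightarrow> 'a) \<Rightarrow> (nat set \<Rightarrow> 'a)"
  where "ext_pow_minus_id k A = (\<lambda>c I. ext_pow k A c I - c I)"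

lemma ext_pow_unipotent_iff:
  "ext_pow_unipotent k A \<longleftrightarrow>
    (\<exists>N. \<forall>c\<in>ext_space (dim_row A) k. (ext_pow_minus_id k A ^^ N) c = (\<lambda>I. 0))"
  unfolding ext_pow_unipotent_def ext_pow_minus_id_def ..

lemma ext_pow_minus_id_pow_in_ext_space:
  "c \<in> ext_space (dim_row A) k \<Longrightarrow> (ext_pow_minus_id k A ^^ N) c \<in> ext_space (dim_row A) k"
  by (induction N) (auto simp: ext_pow_minus_id_def ext_pow_def ext_space_def)

lemma ext_pow_minus_id_linear:
  "ext_pow_minus_id k A (\<lambda>I. \<Sum>J\<in>S. a J * v J I) = (\<lambda>I. \<Sum>J\<in>S. a J * ext_pow_minus_id k A (v J) I)"
  by (simp add: ext_pow_minus_id_def ext_pow_linear right_diff_distrib sum_subtractf)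

lemma ext_pow_minus_id_pow_linear:
  "(ext_pow_minus_id k A ^^ N) (\<lambda>I. \<Sum>J\<in>S. a J * v J I) =
    (\<lambda>I. \<Sum>J\<in>S. a J * (ext_pow_minus_id k A ^^ N) (v J) I)"
  by (induction N) (simp_all add: ext_pow_minus_id_linear)

lemma ext_pow_minus_id_pow_similar:
  fixes A :: "'a :: comm_ring_1 mat"
  assumes sim: "similar_mat_wit A T P Q" and A: "A \<in> carrier_mat n n" and c: "c \<in> ext_space n k"
  shows "(ext_pow_minus_id k A ^^ N) c = ext_pow k P ((ext_pow_minus_id k T ^^ N) (ext_pow k Q c))"
proof -
  note S = similar_mat_witD2[OF A sim]
  have PQ: "ext_pow k P (ext_pow k Q c) = c"
    using ext_pow_mult[of P n Q k c] S ext_pow_one[OF c] by simp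
  have AP: "ext_pow k A (ext_pow k P y) = ext_pow k P (ext_pow k T y)" if y: "y \<in> ext_space n k" for y
  proof -
    have "ext_pow k A (ext_pow k P y) = ext_pow k (P * T) (ext_pow k Q (ext_pow k P y))"
      unfolding S(3) using S by (subst ext_pow_mult[of _ n]) auto
    also have "ext_pow k Q (ext_pow k P y) = y"
      using ext_pow_mult[of Q n P k y] S ext_pow_one[OF y] by simp
    finally show ?thesis using S by (simp add: ext_pow_mult[of P n T])
  qed
  show ?thesis
  proof (induction N)
    case (Suc N)
    let ?y = "(ext_pow_minus_id k T ^^ N) (ext_pow k Q c)"
    have "?y \<in> ext_space n k"
      using ext_pow_minus_id_pow_in_ext_space[of "ext_pow k Q c" T] ext_pow_in_ext_space[of k Q c] S
      by simp
    then show ?case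
      using Suc AP by (simp add: ext_pow_minus_id_def ext_pow_diff)
  qed (simp add: PQ)
qed

lemma ext_pow_unipotent_similar:
  fixes A :: "'a :: comm_ring_1 mat"
  assumes sim: "similar_mat_wit A T P Q" and A: "A \<in> carrier_mat n n"
  shows "ext_pow_unipotent k A \<longleftrightarrow> ext_pow_unipotent k T"
proof -
  have transfer: "ext_pow_unipotent k B"
    if sim: "similar_mat_wit B C P' Q'" and B: "B \<in> carrier_mat n n" and C: "ext_pow_unipotent k C"
    for B C P' Q' :: "'a mat"
  proof -
    have "dim_row C = n" using similar_mat_witD2(5)[OF B sim] by simp
    then obtain N where N: "\<forall>c\<in>ext_space n k. (ext_pow_minus_id k C ^^ N) c = (\<lambda>I. 0)"
      using C unfolding ext_pow_unipotent_iff by auto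
    have "(ext_pow_minus_id k B ^^ N) c = (\<lambda>I. 0)" if c: "c \<in> ext_space n k" for c
    proof -
      have "ext_pow k Q' c \<in> ext_space n k"
        using ext_pow_in_ext_space[of k Q' c] similar_mat_witD2(7)[OF B sim] by simp
      then show ?thesis using ext_pow_minus_id_pow_similar[OF sim B c] N by simp
    qed
    then show ?thesis unfolding ext_pow_unipotent_iff using B by auto
  qed
  show ?thesis
    using transfer[OF sim A] transfer[OF similar_mat_wit_sym[OF sim] similar_mat_witD2(5)[OF A sim]] A
    by blast
qed

definition ext_basis :: "nat set \<Rightarrow> nat set \<Rightarrow> 'a :: zero_neq_one"
  where "ext_basis J I = (if I = J then 1 else 0)"

lemma ext_basis_in_ext_space: "J \<in> ksubsets n k \<Longrightarrow> ext_basis J \<in> ext_space n k"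
  unfolding ext_basis_def ext_space_def by auto

lemma ext_space_sum_basis:
  fixes c :: "nat set \<Rightarrow> 'a :: comm_ring_1"
  assumes "c \<in> ext_space n k"
  shows "c = (\<lambda>I. \<Sum>J\<in>ksubsets n k. c J * ext_basis J I)"
proof
  fix I
  have "(\<Sum>J\<in>ksubsets n k. c J * ext_basis J I) = (\<Sum>J\<in>ksubsets n k. if J = I then c J else 0)"
    by (intro sum.cong) (auto simp: ext_basis_def)
  then show "c I = (\<Sum>J\<in>ksubsets n k. c J * ext_basis J I)"
    using assms finite_ksubsets[of n k] by (simp add: ext_space_def)
qed

lemma ext_pow_unipotent_iff_basis:
  fixes A :: "'a :: comm_ring_1 mat"
  shows "ext_pow_unipotent k A \<longleftrightarrow>
    (\<exists>N. \<forall>J\<in>ksubsets (dim_row A) k. (ext_pow_minus_id k A ^^ N) (ext_basis J) = (\<lambda>I. 0))"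
  unfolding ext_pow_unipotent_iff
proof (intro iffI; elim exE; intro exI ballI)
  fix N J assume "\<forall>c\<in>ext_space (dim_row A) k. (ext_pow_minus_id k A ^^ N) c = (\<lambda>I. 0)"
    and "J \<in> ksubsets (dim_row A) k"
  then show "(ext_pow_minus_id k A ^^ N) (ext_basis J) = (\<lambda>I. 0)"
    using ext_basis_in_ext_space by blast
next
  fix N and c :: "nat set \<Rightarrow> 'a" assume N: "\<forall>J\<in>ksubsets (dim_row A) k. (ext_pow_minus_id k A ^^ N) (ext_basis J) = (\<lambda>I. 0)"
    and c: "c \<in> ext_space (dim_row A) k"
  show "(ext_pow_minus_id k A ^^ N) c = (\<lambda>I. 0)"
    by (subst ext_space_sum_basis[OF c]) (simp add: ext_pow_minus_id_pow_linear N)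
qed

lemma submatrix_map_mat: "submatrix (map_mat f A) I J = map_mat f (submatrix A I J)"
proof (rule eq_matI)
  fix a b
  assume "a < dim_row (map_mat f (submatrix A I J))" "b < dim_col (map_mat f (submatrix A I J))"
  then have a: "a < card {i. i < dim_row A \<and> i \<in> I}" and b: "b < card {j. j < dim_col A \<and> j \<in> J}"
    by (simp_all add: dim_submatrix)
  show "submatrix (map_mat f A) I J $$ (a, b) = map_mat f (submatrix A I J) $$ (a, b)"
    using a b pick_le[OF a] pick_le[OF b] by (simp add: submatrix_index dim_submatrix)
qed (simp_all add: dim_submatrix)

context comm_ring_hom
begin

lemma ext_pow_hom: "ext_pow k (map_mat hom A) (\<lambda>I. hom (c I)) = (\<lambda>I. hom (ext_pow k A c I))"
  unfolding ext_pow_def submatrix_map_mat hom_det by (rule ext) (simp add: hom_distribs)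

lemma ext_pow_minus_id_hom:
  "ext_pow_minus_id k (map_mat hom A) (\<lambda>I. hom (c I)) = (\<lambda>I. hom (ext_pow_minus_id k A c I))"
  unfolding ext_pow_minus_id_def ext_pow_hom by (simp add: hom_distribs)

lemma ext_pow_minus_id_pow_hom:
  "(ext_pow_minus_id k (map_mat hom A) ^^ N) (\<lambda>I. hom (c I)) =
    (\<lambda>I. hom ((ext_pow_minus_id k A ^^ N) c I))"
  by (induction N) (simp_all add: ext_pow_minus_id_hom)

end

lemma (in inj_comm_ring_hom) ext_pow_unipotent_hom_iff:
  "ext_pow_unipotent k (map_mat hom A) \<longleftrightarrow> ext_pow_unipotent k A"
proof -
  have "(\<lambda>I. hom (ext_basis J I)) = ext_basis J" for J
    by (auto simp: ext_basis_def)
  then have "(ext_pow_minus_id k (map_mat hom A) ^^ N) (ext_basis J) =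
      (\<lambda>I. hom ((ext_pow_minus_id k A ^^ N) (ext_basis J) I))" for N J
    using ext_pow_minus_id_pow_hom[where c = "ext_basis J"] by simp
  then show ?thesis unfolding ext_pow_unipotent_iff_basis by (simp add: fun_eq_iff)
qed

section \<open>Triangular matrices\<close>

lemma sum_pick:
  assumes "finite I" "card I = k"
  shows "(\<Sum>a = 0..<k. f (pick I a)) = (\<Sum>i\<in>I. f i)"
  using sum.reindex_bij_betw[OF bij_betw_pick[OF assms(1)]] assms(2) by simp

lemma permutes_pick_le_imp_sum_less:
  assumes I: "finite I" "card I = k" and J: "finite J" "card J = k" and p: "p permutes {0..<k}"
    and le: "\<And>a. a < k \<Longrightarrow> pick I a \<le> pick J (p a)"
  shows "I = J \<or> \<Sum>I < \<Sum>J"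
proof -
  have sum_I: "\<Sum>I = (\<Sum>a = 0..<k. pick I a)"
    using sum_pick[OF I, of id] by simp
  have sum_J: "\<Sum>J = (\<Sum>a = 0..<k. pick J (p a))"
    using sum_pick[OF J, of id] sum.reindex_bij_betw[OF permutes_imp_bij[OF p], of "pick J"] by simp
  have "\<Sum>I \<le> \<Sum>J"
    unfolding sum_I sum_J using le by (intro sum_mono) auto
  moreover have "I = J" if eq: "\<Sum>I = \<Sum>J"
  proof -
    have "pick I a = pick J (p a)" if "a < k" for a
      using sum_mono_inv[OF eq[unfolded sum_I sum_J]] le that by auto
    then have "pick I ` {0..<k} = pick J ` p ` {0..<k}"
      by (auto simp: image_iff)
    then show "I = J"
      using bij_betw_pick[OF I(1)] bij_betw_pick[OF J(1)] permutes_image[OF p] I(2) J(2)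
      by (simp add: bij_betw_def)
  qed
  ultimately show ?thesis by linarith
qed

lemma upper_triangular_minor_nonzero:
  fixes T :: "'a :: comm_ring_1 mat"
  assumes ut: "upper_triangular T" and T: "T \<in> carrier_mat n n"
    and I: "I \<in> ksubsets n k" and J: "J \<in> ksubsets n k" and nz: "det (submatrix T I J) \<noteq> 0"
  shows "I = J \<or> \<Sum>I < \<Sum>J"
proof -
  let ?M = "submatrix T I J"
  note ID = ksubsetsD[OF I] and JD = ksubsetsD[OF J]
  obtain p where "p \<in> {p. p permutes {0..<k}}" and "signof p * (\<Prod>a = 0..<k. ?M $$ (a, p a)) \<noteq> 0"
    using nz unfolding det_def'[OF submatrix_carrier_ksubsets[OF T I J]]
    by (rule sum.not_neutral_contains_not_neutral)
  then have p: "p permutes {0..<k}" and p_nz: "(\<Prod>a = 0..<k. ?M $$ (a, p a)) \<noteq> 0"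
    by auto
  have "pick I a \<le> pick J (p a)" if a: "a < k" for a
  proof (rule ccontr)
    assume "\<not> ?thesis"
    moreover have "p a < k" "pick I a < n"
      using permutes_in_image[OF p] a pick_in_set[of a I] ID by auto
    ultimately have "?M $$ (a, p a) = 0"
      using ut T a submatrix_index_ksubsets[OF T I J a] by (auto simp: upper_triangular_def)
    then have "(\<Prod>a = 0..<k. ?M $$ (a, p a)) = 0" using a by (intro prod_zero) auto
    then show False using p_nz by contradiction
  qed
  then show ?thesis using permutes_pick_le_imp_sum_less[OF ID(3,2) JD(3,2) p] by blast
qed

lemma det_submatrix_upper_triangular:
  fixes T :: "'a :: comm_ring_1 mat"
  assumes ut: "upper_triangular T" and T: "T \<in> carrier_mat n n" and I: "I \<in> ksubsets n k"
  shows "det (submatrix T I I) = (\<Prod>i\<in>I. T $$ (i, i))"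
proof -
  note ID = ksubsetsD[OF I]
  let ?M = "submatrix T I I"
  have M: "?M \<in> carrier_mat k k" by (rule submatrix_carrier_ksubsets[OF T I I])
  have "upper_triangular ?M"
  proof (rule upper_triangularI)
    fix a b assume ba: "b < a" and a: "a < dim_row ?M"
    then have "a < k" "b < k" using M by auto
    moreover have "pick I b < pick I a" "pick I a < n"
      using pick_mono[of a I b] pick_in_set[of a I] ba \<open>a < k\<close> ID by auto
    ultimately show "?M $$ (a, b) = 0"
      using ut T submatrix_index_ksubsets[OF T I I] by (auto simp: upper_triangular_def)
  qed
  then have "det ?M = (\<Prod>a = 0..<k. T $$ (pick I a, pick I a))"
    using det_upper_triangular[OF _ M] M submatrix_index_ksubsets[OF T I I]
    by (simp add: prod_list_diag_prod)
  also have "\<dots> = (\<Prod>i\<in>I. T $$ (i, i))"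
    using prod.reindex_bij_betw[OF bij_betw_pick[OF ID(3)], of "\<lambda>i. T $$ (i, i)"] ID(2) by simp
  finally show ?thesis .
qed

lemma ext_pow_minus_id_upper_triangular:
  fixes T :: "'a :: comm_ring_1 mat"
  assumes ut: "upper_triangular T" and T: "T \<in> carrier_mat n n" and J: "J \<in> ksubsets n k"
    and zero: "\<And>L. L \<in> ksubsets n k \<Longrightarrow> \<Sum>J < \<Sum>L \<Longrightarrow> y L = 0"
  shows "ext_pow_minus_id k T y J = (det (submatrix T J J) - 1) * y J"
proof -
  let ?KS = "ksubsets n k"
  have "det (submatrix T J L) * y L = 0" if L: "L \<in> ?KS - {J}" for L
  proof (cases "det (submatrix T J L) = 0")
    case False
    then have "\<Sum>J < \<Sum>L" using upper_triangular_minor_nonzero[OF ut T J, of L] L by auto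
    then show ?thesis using zero L by simp
  qed simp
  then have "(\<Sum>L\<in>?KS - {J}. det (submatrix T J L) * y L) = 0"
    by (rule sum.neutral[OF ballI])
  moreover have "ext_pow k T y J = det (submatrix T J J) * y J + (\<Sum>L\<in>?KS - {J}. det (submatrix T J L) * y L)"
    using T J by (simp add: ext_pow_def sum.remove[OF finite_ksubsets])
  ultimately show ?thesis by (simp add: ext_pow_minus_id_def algebra_simps)
qed

lemma ext_pow_unipotent_upper_triangular:
  fixes T :: "'a :: comm_ring_1 mat"
  assumes ut: "upper_triangular T" and T: "T \<in> carrier_mat n n"
    and diag: "\<And>I. I \<in> ksubsets n k \<Longrightarrow> det (submatrix T I I) = 1"
  shows "ext_pow_unipotent k T"
proof -
  let ?W = "\<Sum>{0..<n}"
  have dim: "dim_row T = n" using T by simp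
  have weight: "\<Sum>I \<le> ?W" if "I \<in> ksubsets n k" for I
    using ksubsetsD[OF that] by (intro sum_mono2) auto
  \<comment> \<open>the operator is strictly triangular for the weight \<open>\<Sum>I\<close>, so each application lowers
      the largest weight in the support\<close>
  have kill: "\<forall>I. ?W < \<Sum>I + m \<longrightarrow> (ext_pow_minus_id k T ^^ m) c I = 0"
    if c: "c \<in> ext_space n k" for c m
  proof (induction m)
    case 0
    show ?case using c weight unfolding ext_space_def by fastforce
  next
    case (Suc m)
    let ?y = "(ext_pow_minus_id k T ^^ m) c"
    have y: "?y \<in> ext_space n k"
      using ext_pow_minus_id_pow_in_ext_space[of c T k m] c dim by simp
    show ?case
    proof (intro allI impI)
      fix I assume I: "?W < \<Sum>I + Suc m"
      show "(ext_pow_minus_id k T ^^ Suc m) c I = 0"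
      proof (cases "I \<in> ksubsets n k")
        case True
        have "\<And>L. \<Sum>I < \<Sum>L \<Longrightarrow> ?y L = 0" using Suc.IH I by simp
        then show ?thesis using ext_pow_minus_id_upper_triangular[OF ut T True] diag[OF True] by simp
      next
        case False
        then show ?thesis using y by (simp add: ext_pow_minus_id_def ext_pow_def ext_space_def dim)
      qed
    qed
  qed
  have "(ext_pow_minus_id k T ^^ Suc ?W) c I = 0" if "c \<in> ext_space n k" for c I
    by (rule kill[OF that, rule_format]) simp
  then have "\<forall>c\<in>ext_space n k. (ext_pow_minus_id k T ^^ Suc ?W) c = (\<lambda>I. 0)"
    by blast
  then show ?thesis unfolding ext_pow_unipotent_iff dim by blast
qed

lemma ext_pow_minus_id_pow_basis_upper_triangular:
  fixes T :: "'a :: comm_ring_1 mat"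
  assumes ut: "upper_triangular T" and T: "T \<in> carrier_mat n n" and I: "I \<in> ksubsets n k"
  shows "(ext_pow_minus_id k T ^^ m) (ext_basis I) I = (det (submatrix T I I) - 1) ^ m"
proof -
  have dim: "dim_row T = n" using T by simp
  have "(ext_pow_minus_id k T ^^ m) (ext_basis I) I = (det (submatrix T I I) - 1) ^ m \<and>
      (\<forall>J. J \<noteq> I \<longrightarrow> \<Sum>I \<le> \<Sum>J \<longrightarrow> (ext_pow_minus_id k T ^^ m) (ext_basis I) J = 0)"
  proof (induction m)
    case 0
    show ?case by (simp add: ext_basis_def)
  next
    case (Suc m)
    let ?y = "(ext_pow_minus_id k T ^^ m) (ext_basis I)"
    have y: "?y \<in> ext_space n k"
      using ext_pow_minus_id_pow_in_ext_space[of "ext_basis I" T k m] ext_basis_in_ext_space[OF I] dim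
      by simp
    have step: "ext_pow_minus_id k T ?y J = (det (submatrix T J J) - 1) * ?y J" if "\<Sum>I \<le> \<Sum>J" for J
    proof (cases "J \<in> ksubsets n k")
      case True
      show ?thesis
      proof (rule ext_pow_minus_id_upper_triangular[OF ut T True])
        fix L assume "\<Sum>J < \<Sum>L"
        then have "L \<noteq> I" "\<Sum>I \<le> \<Sum>L" using that by auto
        then show "?y L = 0" using Suc.IH by blast
      qed
    next
      case False
      then show ?thesis using y by (simp add: ext_pow_minus_id_def ext_pow_def ext_space_def dim)
    qed
    show ?case using step Suc.IH by simp
  qed
  then show ?thesis ..
qed

lemma ext_pow_unipotent_upper_triangular_iff:
  fixes T :: "'a :: idom mat"
  assumes ut: "upper_triangular T" and T: "T \<in> carrier_mat n n"
  shows "ext_pow_unipotent k T \<longleftrightarrow> (\<forall>I\<in>ksubsets n k. (\<Prod>i\<in>I. T $$ (i, i)) = 1)"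
proof
  assume "ext_pow_unipotent k T"
  then obtain N where N: "\<forall>I\<in>ksubsets n k. (ext_pow_minus_id k T ^^ N) (ext_basis I) = (\<lambda>J. 0)"
    unfolding ext_pow_unipotent_iff_basis using T by auto
  show "\<forall>I\<in>ksubsets n k. (\<Prod>i\<in>I. T $$ (i, i)) = 1"
  proof
    fix I assume I: "I \<in> ksubsets n k"
    have "(det (submatrix T I I) - 1) ^ N = 0"
      using ext_pow_minus_id_pow_basis_upper_triangular[OF ut T I, of N] N I by (metis (mono_tags))
    then show "(\<Prod>i\<in>I. T $$ (i, i)) = 1"
      using det_submatrix_upper_triangular[OF ut T I] by simp
  qed
next
  assume "\<forall>I\<in>ksubsets n k. (\<Prod>i\<in>I. T $$ (i, i)) = 1"
  then show "ext_pow_unipotent k T"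
    using ext_pow_unipotent_upper_triangular[OF ut T] det_submatrix_upper_triangular[OF ut T] by simp
qed

section \<open>Unipotent matrices\<close>

lemma index_mult_mat_sum:
  assumes "A \<in> carrier_mat n n" "B \<in> carrier_mat n n" "i < n" "j < n"
  shows "(A * B) $$ (i, j) = (\<Sum>l<n. A $$ (i, l) * B $$ (l, j))"
  using assms by (auto simp: scalar_prod_def atLeast0LessThan intro!: sum.cong)

lemma upper_triangular_mult:
  fixes A B :: "'a :: semiring_1 mat"
  assumes A: "A \<in> carrier_mat n n" "upper_triangular A" and B: "B \<in> carrier_mat n n" "upper_triangular B"
  shows "upper_triangular (A * B)"
    and "i < n \<Longrightarrow> (A * B) $$ (i, i) = A $$ (i, i) * B $$ (i, i)"
proof -
  have zero: "A $$ (i, l) * B $$ (l, j) = 0" if "i < n" "l < n" "j \<le> i" "l \<noteq> i \<or> j \<noteq> i" for i j l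
    using A B that by (cases "l < i") (auto simp: upper_triangular_def)
  show "upper_triangular (A * B)"
  proof (rule upper_triangularI)
    fix i j assume ji: "j < i" and "i < dim_row (A * B)"
    then have ij: "i < n" "j < n" using A by auto
    show "(A * B) $$ (i, j) = 0"
      unfolding index_mult_mat_sum[OF A(1) B(1) ij] using zero ij ji by (intro sum.neutral) auto
  qed
  assume i: "i < n"
  have "(A * B) $$ (i, i) = A $$ (i, i) * B $$ (i, i) + (\<Sum>l\<in>{..<n} - {i}. A $$ (i, l) * B $$ (l, i))"
    unfolding index_mult_mat_sum[OF A(1) B(1) i i] using i by (simp add: sum.remove[of "{..<n}" i])
  also have "(\<Sum>l\<in>{..<n} - {i}. A $$ (i, l) * B $$ (l, i)) = 0"
    using zero i by (intro sum.neutral) auto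
  finally show "(A * B) $$ (i, i) = A $$ (i, i) * B $$ (i, i)" by simp
qed

lemma upper_triangular_pow:
  fixes A :: "'a :: comm_semiring_1 mat"
  assumes A: "A \<in> carrier_mat n n" "upper_triangular A"
  shows "upper_triangular (A ^\<^sub>m m) \<and> (\<forall>i<n. (A ^\<^sub>m m) $$ (i, i) = A $$ (i, i) ^ m)"
proof (induction m)
  case (Suc m)
  then show ?case
    using upper_triangular_mult[OF pow_carrier_mat[OF A(1)] _ A] by (simp add: mult.commute)
qed (use A in auto)

lemma strictly_upper_triangular_nilpotent:
  fixes U :: "'a :: semiring_1 mat"
  assumes U: "U \<in> carrier_mat n n" and zero: "\<And>i j. i < n \<Longrightarrow> j \<le> i \<Longrightarrow> U $$ (i, j) = 0"
  shows "U ^\<^sub>m n = 0\<^sub>m n n"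
proof -
  have "\<forall>i<n. \<forall>j<n. j < i + m \<longrightarrow> (U ^\<^sub>m m) $$ (i, j) = 0" for m
  proof (induction m)
    case (Suc m)
    show ?case
    proof (intro allI impI)
      fix i j assume ij: "i < n" "j < n" "j < i + Suc m"
      have "(U ^\<^sub>m m) $$ (i, l) * U $$ (l, j) = 0" if "l < n" for l
        using Suc.IH zero[of l j] ij that by (cases "l < i + m") auto
      then show "(U ^\<^sub>m Suc m) $$ (i, j) = 0"
        unfolding pow_mat.simps index_mult_mat_sum[OF pow_carrier_mat[OF U] U ij(1,2)] by simp
    qed
  qed (use U in simp)
  then show ?thesis using U by (intro eq_matI) auto
qed

lemma unipotent_mat_upper_triangular_iff:
  fixes T :: "'a :: idom mat"
  assumes ut: "upper_triangular T" and T: "T \<in> carrier_mat n n"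
  shows "unipotent_mat T \<longleftrightarrow> (\<forall>i<n. T $$ (i, i) = 1)"
proof
  have U: "T - 1\<^sub>m n \<in> carrier_mat n n" by (rule minus_carrier_mat) simp
  have utU: "upper_triangular (T - 1\<^sub>m n)"
    using ut T by (auto simp: upper_triangular_def)
  {
    assume "unipotent_mat T"
    then obtain N where N: "(T - 1\<^sub>m n) ^\<^sub>m N = 0\<^sub>m n n"
      unfolding unipotent_mat_def using T by auto
    show "\<forall>i<n. T $$ (i, i) = 1"
    proof (intro allI impI)
      fix i assume i: "i < n"
      have "(T $$ (i, i) - 1) ^ N = 0"
        using upper_triangular_pow[OF U utU, of N] N i T by simp
      then show "T $$ (i, i) = 1" by simp
    qed
  }
  assume "\<forall>i<n. T $$ (i, i) = 1"
  then have "(T - 1\<^sub>m n) ^\<^sub>m n = 0\<^sub>m n n"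
    using ut T by (intro strictly_upper_triangular_nilpotent[OF U]) (auto simp: upper_triangular_def)
  then show "unipotent_mat T" unfolding unipotent_mat_def using T by auto
qed

lemma similar_mat_wit_minus_one:
  fixes A :: "'a :: comm_ring_1 mat"
  assumes sim: "similar_mat_wit A T P Q" and A: "A \<in> carrier_mat n n"
  shows "similar_mat_wit (A - 1\<^sub>m n) (T - 1\<^sub>m n) P Q"
proof -
  note S = similar_mat_witD2[OF A sim]
  have "P * (T - 1\<^sub>m n) * Q = P * T * Q - P * Q"
    using S by (simp add: mult_minus_distrib_mat[of _ n n] minus_mult_distrib_mat[of _ n n])
  then show ?thesis
    using S by (intro similar_mat_witI[OF S(1,2)]) auto
qed

lemma unipotent_mat_similar:
  fixes A :: "'a :: comm_ring_1 mat"
  assumes sim: "similar_mat_wit A T P Q" and A: "A \<in> carrier_mat n n"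
  shows "unipotent_mat A \<longleftrightarrow> unipotent_mat T"
proof -
  note S = similar_mat_witD2[OF A sim]
  have AT: "similar_mat_wit (A - 1\<^sub>m n) (T - 1\<^sub>m n) P Q"
    by (rule similar_mat_wit_minus_one[OF sim A])
  have "(A - 1\<^sub>m n) ^\<^sub>m N = 0\<^sub>m n n \<longleftrightarrow> (T - 1\<^sub>m n) ^\<^sub>m N = 0\<^sub>m n n" for N
    using similar_mat_wit_pow_id[OF AT, of N] similar_mat_wit_pow_id[OF similar_mat_wit_sym[OF AT], of N] S
    by auto
  then show ?thesis unfolding unipotent_mat_def using S by simp
qed

lemma (in inj_comm_ring_hom) unipotent_mat_hom_iff:
  assumes A: "A \<in> carrier_mat n n"
  shows "unipotent_mat (map_mat hom A) \<longleftrightarrow> unipotent_mat A"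
proof -
  have "map_mat hom (A - 1\<^sub>m n) = map_mat hom A - 1\<^sub>m n"
    using A by (intro eq_matI) (auto simp: hom_distribs)
  moreover have carrier: "(A - 1\<^sub>m n) ^\<^sub>m N \<in> carrier_mat n n" for N
    by (intro pow_carrier_mat minus_carrier_mat) simp
  ultimately have "(map_mat hom A - 1\<^sub>m n) ^\<^sub>m N = map_mat hom ((A - 1\<^sub>m n) ^\<^sub>m N)" for N
    using mat_hom_pow[OF minus_carrier_mat[OF one_carrier_mat], of A n N] by simp
  moreover have "map_mat hom M = 0\<^sub>m n n \<longleftrightarrow> M = 0\<^sub>m n n" if "M \<in> carrier_mat n n" for M
    using that by (auto simp: mat_eq_iff)
  ultimately show ?thesis
    unfolding unipotent_mat_def using A carrier by simp
qed

section \<open>Triangularization over an algebraically closed field\<close>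

lemma invertible_mat_with_first_col:
  fixes v :: "'a :: field vec"
  assumes v: "v \<in> carrier_vec n" and v0: "v \<noteq> 0\<^sub>v n"
  obtains W W' where "W \<in> carrier_mat n n" "W' \<in> carrier_mat n n" "W' * W = 1\<^sub>m n" "W * W' = 1\<^sub>m n"
    "col W 0 = v"
proof -
  interpret vec_space "TYPE('a)" n .
  define b where "b = basis_completion v"
  note bc = basis_completion[OF v v0, folded b_def]
  define W where "W = mat_of_cols n b"
  have W: "W \<in> carrier_mat n n" unfolding W_def using bc mat_of_cols_carrier(1)[of n b] by simp
  have cols: "cols W = b" unfolding W_def using bc by simp
  have "0 < n" using v v0 by (cases n) auto
  moreover have "b ! 0 = v" using bc \<open>0 < n\<close> by (cases b) auto
  ultimately have col: "col W 0 = v" unfolding W_def using bc v by (subst col_mat_of_cols) auto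
  have "det W \<noteq> 0"
  proof
    assume "det W = 0"
    then obtain u where "u \<in> carrier_vec n" "u \<noteq> 0\<^sub>v n" "W *\<^sub>v u = 0\<^sub>v n"
      using det_0_iff_vec_prod_zero_field[OF W] by blast
    then have "lin_dep (set (cols W))" using bc cols by (intro lin_depI[OF W]) auto
    then show False using bc cols by simp
  qed
  then obtain W' where "W' \<in> carrier_mat n n" "W' * W = 1\<^sub>m n" "W * W' = 1\<^sub>m n"
    using det_non_zero_imp_unit[OF W, of "()"] unfolding Units_def ring_mat_def by auto
  then show ?thesis using that W col by blast
qed

lemma similar_mat_wit_eigenvector_first:
  fixes A :: "'a :: field mat"
  assumes A: "A \<in> carrier_mat n n" and ev: "eigenvector A v e"
  obtains A' W W' where "similar_mat_wit A A' W W'" and "\<And>i. i < n \<Longrightarrow> A' $$ (i, 0) = (if i = 0 then e else 0)"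
proof -
  have v: "v \<in> carrier_vec n" and v0: "v \<noteq> 0\<^sub>v n" and Av: "A *\<^sub>v v = e \<cdot>\<^sub>v v"
    using A ev unfolding eigenvector_def by auto
  obtain W W' where W: "W \<in> carrier_mat n n" and W': "W' \<in> carrier_mat n n"
    and W'W: "W' * W = 1\<^sub>m n" and WW': "W * W' = 1\<^sub>m n" and col: "col W 0 = v"
    by (rule invertible_mat_with_first_col[OF v v0])
  have n: "0 < n" using v v0 by (cases n) auto
  define A' where "A' = W' * A * W"
  have A': "A' \<in> carrier_mat n n" unfolding A'_def using W W' A by auto
  have "W * A' * W' = (W * W') * A * (W * W')"
    unfolding A'_def using W W' A by (simp add: assoc_mult_mat[of _ n n _ n _ n])
  then have sim: "similar_mat_wit A A' W W'"
    using WW' W'W A A' W W' by (intro similar_mat_witI) auto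
  have "col A' 0 = (W' * A) *\<^sub>v col W 0"
    unfolding A'_def using W W' A n by (intro col_mult2) auto
  also have "\<dots> = W' *\<^sub>v (A *\<^sub>v v)" unfolding col using W' A v by simp
  also have "\<dots> = e \<cdot>\<^sub>v (W' *\<^sub>v v)" unfolding Av using W' v by (rule mult_mat_vec)
  also have "W' *\<^sub>v v = col (W' * W) 0"
    unfolding col[symmetric] using W' W n by (intro col_mult2[symmetric]) auto
  finally have col_A': "col A' 0 = e \<cdot>\<^sub>v unit_vec n 0" unfolding W'W using n by simp
  have "A' $$ (i, 0) = (if i = 0 then e else 0)" if "i < n" for i
    using A' that n arg_cong[OF col_A', of "\<lambda>x :: 'a vec. x $ i"] by auto
  with sim show ?thesis using that by blast
qed

lemma exists_similar_upper_triangular: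
  fixes A :: "'a :: alg_closed_field mat"
  assumes "A \<in> carrier_mat n n"
  obtains T P Q where "similar_mat_wit A T P Q" and "upper_triangular T"
  using assms
proof (induction n arbitrary: A thesis)
  case 0
  then show ?case using similar_mat_wit_refl[OF "0.prems"(2)] by (auto simp: upper_triangular_def)
next
  case (Suc m A)
  have A: "A \<in> carrier_mat (Suc m) (Suc m)" by fact
  obtain e where "poly (char_poly A) e = 0"
    using alg_closed_imp_poly_has_root[of "char_poly A"] degree_monic_char_poly[OF A] by auto
  then obtain v where "eigenvector A v e"
    using eigenvalue_root_char_poly[OF A] unfolding eigenvalue_def by blast
  then obtain A' W W' where simAA': "similar_mat_wit A A' W W'"
    and col: "\<And>i. i < Suc m \<Longrightarrow> A' $$ (i, 0) = (if i = 0 then e else 0)"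
    using similar_mat_wit_eigenvector_first[OF A] by blast
  have dims: "dim_row A' = 1 + m" "dim_col A' = 1 + m" using similar_mat_witD2(5)[OF A simAA'] by auto
  obtain A1 A2 A0 A3 where split: "split_block A' 1 1 = (A1, A2, A0, A3)"
    by (cases "split_block A' 1 1") auto
  note sb = split_block[OF split dims]
  have A1: "A1 = mat 1 1 (\<lambda>_. e)" and A0: "A0 = 0\<^sub>m m 1"
    using split[unfolded split_block_def Let_def] col dims by auto
  obtain B P' Q' where simA3: "similar_mat_wit A3 B P' Q'" and utB: "upper_triangular B"
    using Suc.IH[OF _ sb(4)] by blast
  note S' = similar_mat_witD2[OF sb(4) simA3]
  have "A2 = 1\<^sub>m 1 * (A2 * P') * Q'"
    using sb S' by (simp add: assoc_mult_mat[of _ 1 m _ m _ m])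
  moreover have "A0 = P' * A0 * 1\<^sub>m 1" unfolding A0 using S' by auto
  ultimately have simA'C: "similar_mat_wit A' (four_block_mat A1 (A2 * P') A0 B)
      (four_block_mat (1\<^sub>m 1) (0\<^sub>m 1 m) (0\<^sub>m m 1) P') (four_block_mat (1\<^sub>m 1) (0\<^sub>m 1 m) (0\<^sub>m m 1) Q')"
    unfolding sb(5) using sb S'
    by (intro similar_mat_wit_four_block[OF similar_mat_wit_refl[OF sb(1)] simA3]) auto
  have "upper_triangular (four_block_mat A1 (A2 * P') A0 B)"
    unfolding A0 by (rule upper_triangular_four_block[OF sb(1) S'(5) _ utB]) (auto simp: A1 upper_triangular_def)
  then show ?case using Suc.prems(1) similar_mat_wit_trans[OF simAA' simA'C] by blast
qed

section \<open>Descent from the algebraic closure\<close>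

definition mat_trace :: "'a :: comm_ring_1 mat \<Rightarrow> 'a"
  where "mat_trace A = (\<Sum>i<dim_row A. A $$ (i, i))"

lemma mat_trace_mult_comm:
  fixes A B :: "'a :: comm_ring_1 mat"
  assumes A: "A \<in> carrier_mat n m" and B: "B \<in> carrier_mat m n"
  shows "mat_trace (A * B) = mat_trace (B * A)"
proof -
  have "mat_trace (A * B) = (\<Sum>i<n. \<Sum>l<m. A $$ (i, l) * B $$ (l, i))"
    unfolding mat_trace_def using A B by (auto simp: scalar_prod_def atLeast0LessThan intro!: sum.cong)
  also have "\<dots> = (\<Sum>l<m. \<Sum>i<n. B $$ (l, i) * A $$ (i, l))"
    by (subst sum.swap) (simp add: mult.commute)
  also have "\<dots> = mat_trace (B * A)"
    unfolding mat_trace_def using A B by (auto simp: scalar_prod_def atLeast0LessThan intro!: sum.cong)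
  finally show ?thesis .
qed

lemma mat_trace_similar:
  fixes A :: "'a :: comm_ring_1 mat"
  assumes sim: "similar_mat_wit A T P Q" and A: "A \<in> carrier_mat n n"
  shows "mat_trace A = mat_trace T"
proof -
  note S = similar_mat_witD2[OF A sim]
  have "mat_trace A = mat_trace (Q * (P * T))"
    unfolding S(3) using S by (intro mat_trace_mult_comm[of _ n n]) auto
  also have "Q * (P * T) = T"
    using S by (simp add: assoc_mult_mat[symmetric, of Q n n P n T n])
  finally show ?thesis .
qed

lemma (in comm_ring_hom) mat_trace_hom:
  "A \<in> carrier_mat n n \<Longrightarrow> mat_trace (map_mat hom A) = hom (mat_trace A)"
  unfolding mat_trace_def by (simp add: hom_distribs)

lemma Ql_absval_root_of_unity:
  assumes nv: "is_Ql_absval l nv" and root: "\<gamma> ^ k = 1" and k: "0 < k"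
  shows "nv \<gamma> = 1"
proof -
  have mult: "\<And>x y. nv (x * y) = nv x * nv y" and nonneg: "nv \<gamma> \<ge> 0"
    and one: "nv 1 = 1"
    using nv unfolding is_Ql_absval_def padic_abs_int_def by (auto dest: spec[of _ 1])
  have "nv (\<gamma> ^ k) = nv \<gamma> ^ k"
    by (induction k) (simp_all add: one mult)
  then have "nv \<gamma> ^ k = 1 ^ k" using root one by simp
  then show ?thesis using power_eq_iff_eq_base[OF k nonneg zero_le_one] by blast
qed

interpretation to_ac: field_hom "to_ac :: 'a :: field \<Rightarrow> 'a alg_closure"
  by unfold_locales auto

lemma ext_pow_unipotent_iff_triangular_diag:
  fixes A :: "'a :: field mat"
  assumes A: "A \<in> carrier_mat n n"
    and sim: "similar_mat_wit (map_mat to_ac A) T P Q" and ut: "upper_triangular T"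
  shows "ext_pow_unipotent k A \<longleftrightarrow> (\<forall>I\<in>ksubsets n k. (\<Prod>i\<in>I. T $$ (i, i)) = 1)"
proof -
  have A': "map_mat to_ac A \<in> carrier_mat n n" using A by simp
  show ?thesis
    using to_ac.ext_pow_unipotent_hom_iff[of k A] ext_pow_unipotent_similar[OF sim A']
      ext_pow_unipotent_upper_triangular_iff[OF ut similar_mat_witD2(5)[OF A' sim]]
    by simp
qed

lemma unipotent_mat_smult_iff_triangular_diag:
  fixes A :: "'a :: field mat"
  assumes A: "A \<in> carrier_mat n n"
    and sim: "similar_mat_wit (map_mat to_ac A) T P Q" and ut: "upper_triangular T"
  shows "unipotent_mat (\<gamma> \<cdot>\<^sub>m A) \<longleftrightarrow> (\<forall>i<n. to_ac \<gamma> * T $$ (i, i) = 1)"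
proof -
  have A': "map_mat to_ac A \<in> carrier_mat n n" using A by simp
  have T: "T \<in> carrier_mat n n" using similar_mat_witD2(5)[OF A' sim] .
  have "map_mat to_ac (\<gamma> \<cdot>\<^sub>m A) = to_ac \<gamma> \<cdot>\<^sub>m map_mat to_ac A"
    by (intro eq_matI) auto
  then have "unipotent_mat (\<gamma> \<cdot>\<^sub>m A) \<longleftrightarrow> unipotent_mat (to_ac \<gamma> \<cdot>\<^sub>m map_mat to_ac A)"
    using to_ac.unipotent_mat_hom_iff[of "\<gamma> \<cdot>\<^sub>m A" n] A by simp
  also have "\<dots> \<longleftrightarrow> unipotent_mat (to_ac \<gamma> \<cdot>\<^sub>m T)"
    using unipotent_mat_similar[OF similar_mat_wit_smult[OF sim] smult_carrier_mat[OF A']] .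
  also have "\<dots> \<longleftrightarrow> (\<forall>i<n. to_ac \<gamma> * T $$ (i, i) = 1)"
    using unipotent_mat_upper_triangular_iff[of "to_ac \<gamma> \<cdot>\<^sub>m T" n] ut T
    by (simp add: upper_triangular_def)
  finally show ?thesis .
qed

lemma constant_diag_iff_base_scalar:
  fixes A :: "'a :: field_char_0 mat"
  assumes A: "A \<in> carrier_mat n n" and n: "0 < n" and k: "0 < k"
    and sim: "similar_mat_wit (map_mat to_ac A) T P Q"
  shows "(\<exists>c. c ^ k = 1 \<and> (\<forall>i<n. T $$ (i, i) = c)) \<longleftrightarrow>
    (\<exists>\<gamma>. \<gamma> ^ k = 1 \<and> (\<forall>i<n. to_ac \<gamma> * T $$ (i, i) = 1))"
proof
  assume "\<exists>c. c ^ k = 1 \<and> (\<forall>i<n. T $$ (i, i) = c)"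
  then obtain c where c: "c ^ k = 1" "\<forall>i<n. T $$ (i, i) = c" by blast
  have A': "map_mat to_ac A \<in> carrier_mat n n" using A by simp
  \<comment> \<open>c is the trace of A divided by n, so its inverse lies in the base field\<close>
  have "to_ac (mat_trace A) = mat_trace T"
    using to_ac.mat_trace_hom[OF A] mat_trace_similar[OF sim A'] by simp
  also have "\<dots> = of_nat n * c"
    using c(2) similar_mat_witD2(5)[OF A' sim] unfolding mat_trace_def by simp
  also have "of_nat n = to_ac (of_nat n :: 'a)" by simp
  finally have trace: "to_ac (mat_trace A) = to_ac (of_nat n) * c" .
  have "c \<noteq> 0" using c(1) k by (auto simp: power_0_left)
  moreover have "(of_nat n :: 'a) \<noteq> 0" using n by simp
  ultimately have "to_ac (of_nat n / mat_trace A) = inverse c"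
    unfolding to_ac_divide trace by (simp add: field_simps del: to_ac_of_nat)
  moreover from this have "(of_nat n / mat_trace A) ^ k = 1"
    using c(1) to_ac_eq_1_iff[of "(of_nat n / mat_trace A) ^ k"] by (simp add: power_inverse del: to_ac_divide)
  ultimately show "\<exists>\<gamma>. \<gamma> ^ k = 1 \<and> (\<forall>i<n. to_ac \<gamma> * T $$ (i, i) = 1)"
    using c(2) \<open>c \<noteq> 0\<close> by (intro exI[of _ "of_nat n / mat_trace A"]) (simp del: to_ac_divide)
next
  assume "\<exists>\<gamma>. \<gamma> ^ k = 1 \<and> (\<forall>i<n. to_ac \<gamma> * T $$ (i, i) = 1)"
  then obtain \<gamma> where \<gamma>: "\<gamma> ^ k = 1" "\<forall>i<n. to_ac \<gamma> * T $$ (i, i) = 1" by blast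
  then have "\<gamma> \<noteq> 0" using k by (auto simp: power_0_left)
  then have "inverse (to_ac \<gamma>) ^ k = 1" "\<forall>i<n. T $$ (i, i) = inverse (to_ac \<gamma>)"
    using \<gamma> to_ac_power[of \<gamma> k] by (auto simp: power_inverse field_simps simp del: to_ac_power)
  then show "\<exists>c. c ^ k = 1 \<and> (\<forall>i<n. T $$ (i, i) = c)" by blast
qed

theorem ext_pow_unipotent_iff_scaled_unipotent:
  fixes A :: "'a :: field_char_0 mat"
  assumes A: "A \<in> carrier_mat n n" and k: "0 < k" "k < n"
  shows "ext_pow_unipotent k A \<longleftrightarrow> (\<exists>\<gamma>. \<gamma> ^ k = 1 \<and> unipotent_mat (\<gamma> \<cdot>\<^sub>m A))"
proof -
  obtain T P Q where sim: "similar_mat_wit (map_mat to_ac A) T P Q" and ut: "upper_triangular T"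
    using exists_similar_upper_triangular[of "map_mat to_ac A" n] A by auto
  have "ext_pow_unipotent k A \<longleftrightarrow> (\<forall>I\<in>ksubsets n k. (\<Prod>i\<in>I. T $$ (i, i)) = 1)"
    by (rule ext_pow_unipotent_iff_triangular_diag[OF A sim ut])
  also have "\<dots> \<longleftrightarrow> (\<exists>c. c ^ k = 1 \<and> (\<forall>i<n. T $$ (i, i) = c))"
    by (rule prod_ksubsets_eq_one_iff[OF k])
  also have "\<dots> \<longleftrightarrow> (\<exists>\<gamma>. \<gamma> ^ k = 1 \<and> (\<forall>i<n. to_ac \<gamma> * T $$ (i, i) = 1))"
    using k by (intro constant_diag_iff_base_scalar[OF A _ _ sim]) auto
  also have "\<dots> \<longleftrightarrow> (\<exists>\<gamma>. \<gamma> ^ k = 1 \<and> unipotent_mat (\<gamma> \<cdot>\<^sub>m A))"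
    using unipotent_mat_smult_iff_triangular_diag[OF A sim ut] by simp
  finally show ?thesis .
qed

(* HOL-Algebra's prime on monoids would otherwise capture the name in the statement below. *)
hide_const (open) Divisibility.prime

theorem lemma3p7:
  fixes l n k :: nat and nv :: "'a::field_char_0 \<Rightarrow> real" and A :: "'a mat"
  assumes "prime l"
    and "is_Ql_absval l nv"
    and "A \<in> carrier_mat n n"
    and "det A \<noteq> 0"
    and "0 < k" and "k < n"
  shows "ext_pow_unipotent k A \<longleftrightarrow>
           (\<exists>\<gamma>::'a. \<gamma> ^ k = 1 \<and> nv \<gamma> \<le> 1 \<and> unipotent_mat (\<gamma> \<cdot>\<^sub>m A))"
  using ext_pow_unipotent_iff_scaled_unipotent[OF assms(3,5,6)]
    Ql_absval_root_of_unity[OF assms(2) _ assms(5)] by fastforce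

end
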